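(* Given $x_0\in[0,1]$, there is an infinite-dimensional vector subspace $S$ of $C^0([0,1])$ such that every $F$ in the closure of $S$ in $C([0,1])$ with respect to the supremum norm satisfies: (1) $F$ is a primitive of a Kurzweil integrable function, i.e. there is a Kurzweil integrable $f$ on $[0,1]$ with $F(x)-F(0)=\int_0^x f$ for all $x\in[0,1]$; and (2) $F$ is differentiable at every point of $[0,1]$ except possibly at $x_0$.
   Context: $C^0([0,1])$ denotes the set of everywhere differentiable real functions on $[0,1]$; $C([0,1])$ is the Banach space of continuous real functions on $[0,1]$ with the supremum norm. Kurzweil integral means the Henstock–Kurzweil integral. *)

theory Defs
  imports "HOL-Analysis.Analysis"
begin

text \<open>Functions on [0,1] are represented as real \<Rightarrow> real; only values on {0..1} matter.\<close>

definition C0_01 :: "(real \<Rightarrow> real) set" where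
  "C0_01 = {F. \<forall>x\<in>{0..1}. F differentiable (at x within {0..1})}"

definition lin_subspace :: "(real \<Rightarrow> real) set \<Rightarrow> bool" where
  "lin_subspace S \<longleftrightarrow> (\<lambda>x. 0) \<in> S \<and> (\<forall>F\<in>S. \<forall>G\<in>S. (\<lambda>x. F x + G x) \<in> S)
     \<and> (\<forall>c::real. \<forall>F\<in>S. (\<lambda>x. c * F x) \<in> S)"

definition inf_dim_01 :: "(real \<Rightarrow> real) set \<Rightarrow> bool" where
  "inf_dim_01 S \<longleftrightarrow> (\<forall>n::nat. \<exists>Fs::nat \<Rightarrow> real \<Rightarrow> real. (\<forall>i<n. Fs i \<in> S) \<and>
     (\<forall>c::nat \<Rightarrow> real. (\<forall>x\<in>{0..1}. (\<Sum>i<n. c i * Fs i x) = 0) \<longrightarrow> (\<forall>i<n. c i = 0)))"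

definition sup_closure_01 :: "(real \<Rightarrow> real) set \<Rightarrow> (real \<Rightarrow> real) set" where
  "sup_closure_01 S = {F. continuous_on {0..1} F \<and>
     (\<forall>e>0. \<exists>G\<in>S. \<forall>x\<in>{0..1}. \<bar>F x - G x\<bar> \<le> e)}"

definition kurzweil_primitive_01 :: "(real \<Rightarrow> real) \<Rightarrow> bool" where
  "kurzweil_primitive_01 F \<longleftrightarrow> (\<exists>f::real \<Rightarrow> real. f integrable_on {0..1} \<and>
     (\<forall>x\<in>{0..1}. (f has_integral (F x - F 0)) {0..x}))"

end

theory Submission
  imports Defs
begin

text \<open>Take C1 bumps \<phi>_n with pairwise disjoint supports on one side of x0, shrinking
  to x0, and points p_n with \<phi>_m(p_n) = \<delta>_mn, and let S be their linear span. Evaluation at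
  the p_n recovers the coefficients, so S is infinite-dimensional. If \<phi>_n(y) = 0 for all
  n \<ge> M, then G(y) = \<Sum>_{n<M} G(p_n) \<phi>_n(y) for every G in S, and this identity passes to
  uniform limits F. Near each x \<noteq> x0 all but finitely many bumps vanish, so there F agrees
  with a fixed differentiable finite sum. Being continuous and differentiable off x0, F is
  the Kurzweil integral of its derivative by the fundamental theorem of calculus with one
  exceptional point.\<close>

lemma has_real_derivative_pos_part_sq:
  "((\<lambda>v::real. (max 0 v)\<^sup>2) has_real_derivative 2 * max 0 v) (at v)"
proof -
  consider "v < 0" | "v = 0" | "v > 0" by linarith
  then show ?thesis
  proof cases
    case 1
    have "((\<lambda>v::real. 0) has_real_derivative 2 * max 0 v) (at v)" using 1 by simp
    then show ?thesis
      by (rule has_field_derivative_transform_within_open[OF _ open_lessThan[of 0]])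
         (use 1 in auto)
  next
    case 2
    have "((\<lambda>h::real. max 0 h) \<longlongrightarrow> 0) (at 0)"
      using tendsto_max[OF tendsto_const tendsto_ident_at, of 0 0 UNIV] by simp
    then have "((\<lambda>h::real. ((max 0 (0 + h))\<^sup>2 - (max 0 0)\<^sup>2) / h) \<longlongrightarrow> 0) (at 0)"
      by (rule Lim_transform_within[where d=1]) (auto simp: power2_eq_square max_def)
    then show ?thesis using 2 by (simp add: DERIV_def)
  next
    case 3
    have "((\<lambda>v::real. v\<^sup>2) has_real_derivative 2 * max 0 v) (at v)"
      using 3 by (auto intro!: derivative_eq_intros)
    then show ?thesis
      by (rule has_field_derivative_transform_within_open[OF _ open_greaterThan[of 0]])
         (use 3 in auto)
  qed
qed

definition bump :: "real \<Rightarrow> real \<Rightarrow> real \<Rightarrow> real" where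
  "bump a b t = (max 0 ((t - a) * (b - t)))\<^sup>2"

lemma bump_differentiable: "bump a b differentiable (at t)"
proof -
  have "((\<lambda>t. (max 0 ((t - a) * (b - t)))\<^sup>2) has_real_derivative
          2 * max 0 ((t - a) * (b - t)) * ((b - t) - (t - a))) (at t)"
    by (rule DERIV_chain2[OF has_real_derivative_pos_part_sq]) (auto intro!: derivative_eq_intros)
  then show ?thesis
    unfolding bump_def[abs_def] real_differentiable_def by blast
qed

lemma bump_nonzero_imp_between:
  assumes "a \<le> b" and "bump a b t \<noteq> 0"
  shows "a < t \<and> t < b"
proof -
  have "max 0 y \<noteq> 0 \<Longrightarrow> y > 0" for y :: real
    by (simp add: max_def split: if_splits)
  then have "(t - a) * (b - t) > 0"
    using assms(2) by (simp add: bump_def)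
  then show ?thesis
    using assms(1) by (auto simp: zero_less_mult_iff)
qed

lemma bump_pos: "a < t \<Longrightarrow> t < b \<Longrightarrow> bump a b t > 0"
  by (simp add: bump_def max_def)

lemma kurzweil_primitive_01_if_differentiable_off_finite:
  assumes cont: "continuous_on {0..1} F" and "finite K"
    and diff: "\<forall>x\<in>{0..1} - K. F differentiable (at x within {0..1})"
  shows "kurzweil_primitive_01 F"
proof -
  define f where "f y = vector_derivative F (at y)" for y
  have prim: "(f has_integral (F x - F 0)) {0..x}" if x: "x \<in> {0..1}" for x
  proof (rule fundamental_theorem_of_calculus_interior_strong[OF \<open>finite K\<close>])
    show "0 \<le> x" using x by simp
    show "continuous_on {0..x} F"
      using cont by (rule continuous_on_subset) (use x in auto)
    fix y assume y: "y \<in> {0<..<x} - K"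
    then have "F differentiable (at y within {0..1})" using diff x by auto
    moreover have "at y within {0..1} = at y" using y x by (intro at_within_Icc_at) auto
    ultimately show "(F has_vector_derivative f y) (at y)"
      unfolding f_def using vector_derivative_works by auto
  qed
  show ?thesis
    unfolding kurzweil_primitive_01_def
  proof (intro exI[of _ f] conjI ballI)
    show "f integrable_on {0..1}" using prim[of 1] by auto
  qed (rule prim)
qed

definition finite_span :: "(nat \<Rightarrow> real \<Rightarrow> real) \<Rightarrow> (real \<Rightarrow> real) set" where
  "finite_span \<phi> = {(\<lambda>x. \<Sum>n<N. c n * \<phi> n x) | N c. True}"

lemma finite_span_memI: "(\<lambda>x. \<Sum>n<N. c n * \<phi> n x) \<in> finite_span \<phi>"
  unfolding finite_span_def by blast

lemma sum_lessThan_pad: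
  fixes f :: "nat \<Rightarrow> 'a::comm_monoid_add"
  assumes "N \<le> K"
  shows "(\<Sum>n<N. f n) = (\<Sum>n<K. if n < N then f n else 0)"
proof -
  have "{..<N} = {..<K} \<inter> {n. n < N}" using assms by auto
  then show ?thesis by (simp add: sum.inter_restrict)
qed

lemma sum_coeffs_padded:
  fixes \<phi> :: "nat \<Rightarrow> real \<Rightarrow> real"
  assumes "N \<le> K"
  shows "(\<Sum>n<N. c n * \<phi> n x) = (\<Sum>n<K. (if n < N then c n else 0) * \<phi> n x)"
  by (simp add: sum_lessThan_pad[OF assms] if_distrib[of "\<lambda>z. z * _"] cong: if_cong)

lemma lin_subspace_finite_span: "lin_subspace (finite_span \<phi>)"
  unfolding lin_subspace_def
proof (intro conjI ballI allI)
  show "(\<lambda>x. 0) \<in> finite_span \<phi>"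
    unfolding finite_span_def by (intro CollectI exI[of _ 0]) auto
next
  fix F G assume "F \<in> finite_span \<phi>" "G \<in> finite_span \<phi>"
  then obtain N c L d where F: "F = (\<lambda>x. \<Sum>n<N. c n * \<phi> n x)"
    and G: "G = (\<lambda>x. \<Sum>n<L. d n * \<phi> n x)"
    unfolding finite_span_def by blast
  define c' where "c' n = (if n < N then c n else 0)" for n
  define d' where "d' n = (if n < L then d n else 0)" for n
  have "F = (\<lambda>x. \<Sum>n<max N L. c' n * \<phi> n x)"
    unfolding F c'_def by (simp add: sum_coeffs_padded[of N "max N L"])
  moreover have "G = (\<lambda>x. \<Sum>n<max N L. d' n * \<phi> n x)"
    unfolding G d'_def by (simp add: sum_coeffs_padded[of L "max N L"])
  ultimately have sum: "(\<lambda>x. F x + G x) = (\<lambda>x. \<Sum>n<max N L. (c' n + d' n) * \<phi> n x)"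
    by (simp add: sum.distrib distrib_right)
  show "(\<lambda>x. F x + G x) \<in> finite_span \<phi>"
    unfolding sum by (rule finite_span_memI)
next
  fix a :: real and F assume "F \<in> finite_span \<phi>"
  then obtain N c where F: "F = (\<lambda>x. \<Sum>n<N. c n * \<phi> n x)"
    unfolding finite_span_def by blast
  then have scaled: "(\<lambda>x. a * F x) = (\<lambda>x. \<Sum>n<N. (a * c n) * \<phi> n x)"
    by (simp add: sum_distrib_left mult.assoc)
  show "(\<lambda>x. a * F x) \<in> finite_span \<phi>"
    unfolding scaled by (rule finite_span_memI)
qed

lemma finite_span_differentiable:
  assumes "G \<in> finite_span \<phi>" and "\<And>n. \<phi> n differentiable (at x)"
  shows "G differentiable (at x)"
proof -
  obtain N c where "G = (\<lambda>x. \<Sum>n<N. c n * \<phi> n x)"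
    using assms(1) unfolding finite_span_def by blast
  then show ?thesis
    by (auto intro!: differentiable_sum differentiable_mult assms(2))
qed

lemma finite_span_subset_C0_01:
  assumes "\<And>n x. \<phi> n differentiable (at x)"
  shows "finite_span \<phi> \<subseteq> C0_01"
proof (intro subsetI, unfold C0_01_def mem_Collect_eq, intro ballI)
  fix G x assume "G \<in> finite_span \<phi>"
  then have "G differentiable (at x)"
    using assms by (rule finite_span_differentiable)
  then show "G differentiable (at x within {0..1})"
    by (rule differentiable_at_withinI)
qed

lemma biorthogonal_sum_eval:
  fixes \<phi> :: "nat \<Rightarrow> real \<Rightarrow> real"
  assumes "\<And>m n. \<phi> m (p n) = (if m = n then 1 else 0)"
  shows "(\<Sum>n<N. c n * \<phi> n (p j)) = (if j < N then c j else 0)"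
  by (simp add: assms if_distrib[of "(*) _"] sum.delta' cong: if_cong)

lemma inf_dim_01_finite_span:
  assumes "\<And>n. p n \<in> {0..1}" and "\<And>m n. \<phi> m (p n) = (if m = n then 1 else 0)"
  shows "inf_dim_01 (finite_span \<phi>)"
  unfolding inf_dim_01_def
proof (intro allI exI[of _ \<phi>] conjI impI)
  fix i :: nat
  have unit: "\<phi> i = (\<lambda>x. \<Sum>m<Suc i. (if m = i then 1 else 0) * \<phi> m x)"
    by (simp add: if_distrib[of "\<lambda>z. z * _"] cong: if_cong)
  show "\<phi> i \<in> finite_span \<phi>"
    by (subst unit) (rule finite_span_memI)
next
  fix N c i assume "\<forall>x\<in>{0..1}. (\<Sum>i<N. c i * \<phi> i x) = 0" "i < N"
  then show "c i = 0"
    using assms(1) biorthogonal_sum_eval[OF assms(2), where j = i and N = N and c = c] by fastforce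
qed

lemma finite_span_local_sum:
  assumes biorth: "\<And>m n. \<phi> m (p n) = (if m = n then 1 else 0)"
    and "G \<in> finite_span \<phi>" and vanish: "\<forall>n\<ge>M. \<phi> n y = 0"
  shows "G y = (\<Sum>n<M. G (p n) * \<phi> n y)"
proof -
  obtain N c where G: "G = (\<lambda>x. \<Sum>n<N. c n * \<phi> n x)"
    using \<open>G \<in> finite_span \<phi>\<close> unfolding finite_span_def by blast
  define c' where "c' n = (if n < N then c n else 0)" for n
  have "G y = (\<Sum>n<max N M. c' n * \<phi> n y)"
    unfolding G c'_def by (simp add: sum_coeffs_padded[of N "max N M"])
  also have "\<dots> = (\<Sum>n<M. c' n * \<phi> n y)"
    using vanish by (intro sum.mono_neutral_right) auto
  also have "\<dots> = (\<Sum>n<M. G (p n) * \<phi> n y)"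
    unfolding G c'_def by (simp add: biorthogonal_sum_eval[OF biorth])
  finally show ?thesis .
qed

lemma sup_closure_finite_span_local_sum:
  assumes peaks: "\<And>n. p n \<in> {0..1}"
    and biorth: "\<And>m n. \<phi> m (p n) = (if m = n then 1 else 0)"
    and F: "F \<in> sup_closure_01 (finite_span \<phi>)"
    and y: "y \<in> {0..1}" and vanish: "\<forall>n\<ge>M. \<phi> n y = 0"
  shows "F y = (\<Sum>n<M. F (p n) * \<phi> n y)"
proof -
  define K where "K = (\<Sum>n<M. \<bar>\<phi> n y\<bar>)"
  have "K \<ge> 0" unfolding K_def by (intro sum_nonneg) auto
  have bound: "\<bar>F y - (\<Sum>n<M. F (p n) * \<phi> n y)\<bar> \<le> 0 + e" if "e > 0" for e
  proof -
    define \<epsilon> where "\<epsilon> = e / (1 + K)"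
    have "\<epsilon> > 0" using \<open>e > 0\<close> \<open>K \<ge> 0\<close> by (simp add: \<epsilon>_def)
    then obtain G where G: "G \<in> finite_span \<phi>" and close: "\<forall>x\<in>{0..1}. \<bar>F x - G x\<bar> \<le> \<epsilon>"
      using F unfolding sup_closure_01_def by blast
    have "F y - (\<Sum>n<M. F (p n) * \<phi> n y) = (F y - G y) + (\<Sum>n<M. (G (p n) - F (p n)) * \<phi> n y)"
      using finite_span_local_sum[OF biorth G vanish] by (simp add: sum_subtractf algebra_simps)
    also have "\<bar>\<dots>\<bar> \<le> \<bar>F y - G y\<bar> + (\<Sum>n<M. \<bar>G (p n) - F (p n)\<bar> * \<bar>\<phi> n y\<bar>)"
      by (rule order_trans[OF abs_triangle_ineq]) (simp add: order_trans[OF sum_abs] abs_mult)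
    also have "\<dots> \<le> \<epsilon> + (\<Sum>n<M. \<epsilon> * \<bar>\<phi> n y\<bar>)"
      using close peaks y by (intro add_mono sum_mono mult_right_mono) (auto simp: abs_minus_commute)
    also have "\<dots> = \<epsilon> * (1 + K)"
      by (simp add: K_def sum_distrib_left algebra_simps)
    also have "\<dots> = e"
      using \<open>K \<ge> 0\<close> by (simp add: \<epsilon>_def)
    finally show ?thesis by simp
  qed
  have "\<bar>F y - (\<Sum>n<M. F (p n) * \<phi> n y)\<bar> \<le> 0"
    by (rule field_le_epsilon) (rule bound)
  then show ?thesis by simp
qed

lemma sup_closure_finite_span_differentiable:
  assumes peaks: "\<And>n. p n \<in> {0..1}"
    and biorth: "\<And>m n. \<phi> m (p n) = (if m = n then 1 else 0)"
    and diff: "\<And>n. \<phi> n differentiable (at x)"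
    and F: "F \<in> sup_closure_01 (finite_span \<phi>)" and x: "x \<in> {0..1}"
    and vanish: "\<forall>\<^sub>F y in nhds x. \<forall>n\<ge>M. \<phi> n y = 0"
  shows "F differentiable (at x within {0..1})"
proof -
  obtain d where "d > 0" and d: "\<And>y. dist y x < d \<Longrightarrow> \<forall>n\<ge>M. \<phi> n y = 0"
    using vanish unfolding eventually_nhds_metric by blast
  show ?thesis
  proof (rule differentiable_transform_within[OF _ \<open>d > 0\<close> x])
    show "(\<lambda>y. \<Sum>n<M. F (p n) * \<phi> n y) differentiable (at x within {0..1})"
      by (rule differentiable_at_withinI, rule finite_span_differentiable[OF finite_span_memI diff])
    fix y assume "y \<in> {0..1}" "dist y x < d"
    then show "(\<Sum>n<M. F (p n) * \<phi> n y) = F y"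
      using sup_closure_finite_span_local_sum[OF peaks biorth F \<open>y \<in> {0..1}\<close> d] by simp
  qed
qed

definition bump_radius :: "nat \<Rightarrow> real" where
  "bump_radius n = (1/2) ^ (n + 2)"

lemma bump_radius_pos: "bump_radius n > 0"
  by (simp add: bump_radius_def)

lemma bump_radius_le_quarter: "bump_radius n \<le> 1/4"
  using power_decreasing[of 2 "n + 2" "1/2 :: real"] by (simp add: bump_radius_def power2_eq_square)

lemma bump_radius_antimono: "m \<le> n \<Longrightarrow> bump_radius n \<le> bump_radius m"
  unfolding bump_radius_def by (intro power_decreasing) auto

lemma double_bump_radius_le: "m < n \<Longrightarrow> 2 * bump_radius n \<le> bump_radius m"
  using bump_radius_antimono[of m "n - 1"] by (simp add: bump_radius_def power_Suc_less)

text \<open>The bumps go to the side of x0 on which [0,1] extends by at least 1/2, so that all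
  supports (of length at most 1/2) stay inside [0,1].\<close>
definition bump_side :: "real \<Rightarrow> real" where
  "bump_side x0 = (if x0 \<le> 1/2 then 1 else -1)"

definition bump_seq :: "real \<Rightarrow> nat \<Rightarrow> real \<Rightarrow> real" where
  "bump_seq x0 n x =
     bump (bump_radius n) (2 * bump_radius n) (bump_side x0 * (x - x0))
     / bump (bump_radius n) (2 * bump_radius n) (3/2 * bump_radius n)"

definition bump_peak :: "real \<Rightarrow> nat \<Rightarrow> real" where
  "bump_peak x0 n = x0 + bump_side x0 * (3/2 * bump_radius n)"

lemma abs_bump_side_offset_diff: "\<bar>bump_side x0 * (y - x0) - bump_side x0 * (x - x0)\<bar> = dist y x"
  by (simp add: bump_side_def dist_real_def abs_minus_commute)

lemma bump_seq_nonzero_imp: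
  assumes "bump_seq x0 n x \<noteq> 0"
  shows "bump_radius n < bump_side x0 * (x - x0) \<and> bump_side x0 * (x - x0) < 2 * bump_radius n"
proof -
  have "bump (bump_radius n) (2 * bump_radius n) (bump_side x0 * (x - x0)) \<noteq> 0"
    using assms by (auto simp: bump_seq_def)
  then show ?thesis
    using bump_radius_pos[of n] by (intro bump_nonzero_imp_between) auto
qed

lemma bump_seq_at_peak: "bump_seq x0 m (bump_peak x0 n) = (if m = n then 1 else 0)"
proof (cases "m = n")
  case True
  have "bump (bump_radius n) (2 * bump_radius n) (3/2 * bump_radius n) > 0"
    using bump_radius_pos[of n] by (intro bump_pos) auto
  with True show ?thesis
    by (simp add: bump_seq_def bump_peak_def bump_side_def)
next
  case False
  have "bump_seq x0 m (bump_peak x0 n) = 0"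
  proof (rule ccontr)
    assume "bump_seq x0 m (bump_peak x0 n) \<noteq> 0"
    moreover have "bump_side x0 * (bump_peak x0 n - x0) = 3/2 * bump_radius n"
      by (simp add: bump_peak_def bump_side_def)
    ultimately have "bump_radius m < 3/2 * bump_radius n" "3/2 * bump_radius n < 2 * bump_radius m"
      using bump_seq_nonzero_imp[of x0 m "bump_peak x0 n"] by simp_all
    then show False
      using False double_bump_radius_le[of m n] double_bump_radius_le[of n m] bump_radius_pos[of n]
      by (cases "m < n") auto
  qed
  with False show ?thesis by simp
qed

lemma bump_peak_in_unit_interval: "x0 \<in> {0..1} \<Longrightarrow> bump_peak x0 n \<in> {0..1}"
  using bump_radius_le_quarter[of n] bump_radius_pos[of n] by (auto simp: bump_peak_def bump_side_def)

lemma bump_seq_differentiable: "bump_seq x0 n differentiable (at x)"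
proof -
  have "(\<lambda>x. bump_side x0 * (x - x0)) differentiable (at x)"
    by (intro differentiable_mult differentiable_diff differentiable_const differentiable_ident)
  then have "(bump (bump_radius n) (2 * bump_radius n) \<circ> (\<lambda>x. bump_side x0 * (x - x0)))
      differentiable (at x)"
    using bump_differentiable by (rule differentiable_chain_at)
  then show ?thesis
    unfolding bump_seq_def[abs_def] divide_inverse o_def
    by (rule differentiable_mult[OF _ differentiable_const])
qed

lemma bump_seq_eventually_zero_nhds:
  assumes "x \<noteq> x0"
  shows "\<exists>M. \<forall>\<^sub>F y in nhds x. \<forall>n\<ge>M. bump_seq x0 n y = 0"
proof -
  define t where "t = bump_side x0 * (x - x0)"
  have near: "\<bar>bump_side x0 * (y - x0) - t\<bar> = dist y x" for y
    unfolding t_def by (rule abs_bump_side_offset_diff)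
  have "t \<noteq> 0" using assms by (simp add: t_def bump_side_def)
  consider "t < 0" | "t > 0" using \<open>t \<noteq> 0\<close> by linarith
  then show ?thesis
  proof cases
    case 1
    have "\<forall>\<^sub>F y in nhds x. \<forall>n\<ge>0. bump_seq x0 n y = 0"
      unfolding eventually_nhds_metric
    proof (intro exI[of _ "- t"] conjI allI impI)
      show "- t > 0" using 1 by simp
      fix y n assume "dist y x < - t"
      then have "bump_side x0 * (y - x0) < bump_radius n"
        using near[of y] bump_radius_pos[of n] by linarith
      then show "bump_seq x0 n y = 0" using bump_seq_nonzero_imp by fastforce
    qed
    then show ?thesis by blast
  next
    case 2
    obtain M where M: "(1/2 :: real) ^ M < t"
      using real_arch_pow_inv[of t "1/2 :: real"] 2 by auto
    have small: "2 * bump_radius M < t / 2"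
      using M by (simp add: bump_radius_def power_add)
    have "\<forall>\<^sub>F y in nhds x. \<forall>n\<ge>M. bump_seq x0 n y = 0"
      unfolding eventually_nhds_metric
    proof (intro exI[of _ "t / 2"] conjI allI impI)
      show "t / 2 > 0" using 2 by simp
      fix y n assume "dist y x < t / 2" "M \<le> n"
      then have "2 * bump_radius n < bump_side x0 * (y - x0)"
        using near[of y] small bump_radius_antimono[of M n] by linarith
      then show "bump_seq x0 n y = 0" using bump_seq_nonzero_imp by fastforce
    qed
    then show ?thesis by blast
  qed
qed

theorem mainTheorem12:
  fixes x0 :: real
  assumes "x0 \<in> {0..1}"
  shows "\<exists>S. S \<subseteq> C0_01 \<and> lin_subspace S \<and> inf_dim_01 S \<and>
    (\<forall>F\<in>sup_closure_01 S. kurzweil_primitive_01 F \<and>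
       (\<forall>x\<in>{0..1} - {x0}. F differentiable (at x within {0..1})))"
proof (intro exI[of _ "finite_span (bump_seq x0)"] conjI)
  note peaks = bump_peak_in_unit_interval[OF assms] and biorth = bump_seq_at_peak
  show "finite_span (bump_seq x0) \<subseteq> C0_01"
    by (rule finite_span_subset_C0_01[OF bump_seq_differentiable])
  show "lin_subspace (finite_span (bump_seq x0))"
    by (rule lin_subspace_finite_span)
  show "inf_dim_01 (finite_span (bump_seq x0))"
    by (rule inf_dim_01_finite_span[OF peaks biorth])
  show "\<forall>F\<in>sup_closure_01 (finite_span (bump_seq x0)). kurzweil_primitive_01 F \<and>
          (\<forall>x\<in>{0..1} - {x0}. F differentiable (at x within {0..1}))"
  proof
    fix F assume F: "F \<in> sup_closure_01 (finite_span (bump_seq x0))"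
    have diff: "\<forall>x\<in>{0..1} - {x0}. F differentiable (at x within {0..1})"
      using sup_closure_finite_span_differentiable[OF peaks biorth bump_seq_differentiable F]
        bump_seq_eventually_zero_nhds by blast
    moreover have "continuous_on {0..1} F"
      using F unfolding sup_closure_01_def by blast
    ultimately show "kurzweil_primitive_01 F \<and> (\<forall>x\<in>{0..1} - {x0}. F differentiable (at x within {0..1}))"
      using kurzweil_primitive_01_if_differentiable_off_finite[of F "{x0}"] by blast
  qed
qed

end
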